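(* For every $d\ge 2$ there is a family $\mathcal{F}$ of $2^d+d$ hyperplanes in $\mathbb{R}^d$ in general position that is not in convex position. Specifically, such a family can be obtained by taking hyperplanes $h_1,\ldots,h_d$ sufficiently close to the coordinate hyperplanes $\{x_i=0\}$ and, for each $\delta=(\delta_1,\ldots,\delta_d)\in\{1,-1\}^d$, a hyperplane $h_\delta$ sufficiently close to $\{x:\sum_{i=1}^d\delta_ix_i=1\}$, chosen so that the family is in general position.
   Context: A set of $n\ge d$ hyperplanes in $\mathbb{R}^d$ is in general position if every $d$ of them intersect in a single point and these $\binom nd$ points are pairwise distinct. A set $\{U_1,\ldots,U_n\}$ of hyperplanes is in convex position if there is a $d$-dimensional convex polytope $P\subset\mathbb{R}^d$ such that $U_i\cap P$ is a $(d-1)$-dimensional face (facet) of $P$ for every $i$. *)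

theory Defs
  imports "HOL-Analysis.Analysis"
begin

definition is_hyperplane :: "(real^'n) set \<Rightarrow> bool" where
  "is_hyperplane U \<longleftrightarrow> (\<exists>a b. a \<noteq> 0 \<and> U = {x. a \<bullet> x = b})"

definition general_position :: "(real^'n) set set \<Rightarrow> bool" where
  "general_position H \<longleftrightarrow>
     finite H \<and> card H \<ge> CARD('n) \<and> (\<forall>U\<in>H. is_hyperplane U) \<and>
     (\<forall>S. S \<subseteq> H \<and> card S = CARD('n) \<longrightarrow> (\<exists>!p. p \<in> \<Inter>S)) \<and>
     (\<forall>S T. S \<subseteq> H \<and> card S = CARD('n) \<and> T \<subseteq> H \<and> card T = CARD('n) \<and> S \<noteq> T
            \<longrightarrow> \<Inter>S \<noteq> \<Inter>T)"

definition convex_position :: "(real^'n) set set \<Rightarrow> bool" where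
  "convex_position H \<longleftrightarrow>
     (\<exists>P. polytope P \<and> aff_dim P = int CARD('n) \<and> (\<forall>U\<in>H. (U \<inter> P) facet_of P))"

definition sign_vectors :: "(real^'n) set" where
  "sign_vectors = {\<delta>. \<forall>i. \<delta> $ i = 1 \<or> \<delta> $ i = -1}"

end

theory Submission
  imports Defs
begin

text \<open>
  Perturb the model arrangement, consisting of the \<open>d\<close> coordinate hyperplanes and the \<open>2^d\<close>
  facet hyperplanes \<open>\<delta> \<bullet> x = 1\<close> of the cross-polytope. If a full-dimensional polytope \<open>P\<close> had
  every perturbed hyperplane as a facet hyperplane, then \<open>P\<close> would lie on one side of each
  near-coordinate hyperplane, i.e. roughly in the orthant \<open>{x. \<forall>i. \<delta>\<^sub>i x\<^sub>i \<le> 0}\<close> for some sign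
  vector \<open>\<delta>\<close>. But there \<open>\<delta> \<bullet> x\<close> is at most about \<open>0\<close>, so the hyperplane near \<open>\<delta> \<bullet> x = 1\<close> misses
  \<open>P\<close>, quantitatively once the perturbation is below \<open>1/(4d+2)\<close>. Since the perturbed hyperplanes
  are pairwise distinct, there are \<open>2^d + d\<close> of them.

  General position is reached by perturbing one hyperplane at a time: the new normal avoids
  the spans of fewer than \<open>d\<close> old normals, and the new offset avoids the values of the new
  normal at the finitely many old vertices. Both excluded sets are negligible, so admissible
  choices exist arbitrarily close to the model.
\<close>

lemma hyperplane_eq_imp_proportional:
  fixes a c :: "'a::real_inner"
  assumes "a \<noteq> 0" and eq: "{x. a \<bullet> x = b} = {x. c \<bullet> x = d}"
  obtains k where "c = k *\<^sub>R a" "d = k * b"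
proof -
  define k where "k = (c \<bullet> a) / (a \<bullet> a)"
  have aa: "a \<bullet> a \<noteq> 0" using assms(1) by simp
  have proj: "c \<bullet> x + (b - a \<bullet> x) * k = d" for x
  proof -
    define y where "y = x + ((b - a \<bullet> x) / (a \<bullet> a)) *\<^sub>R a"
    have "a \<bullet> y = b" using aa by (simp add: y_def inner_add_right)
    then have "c \<bullet> y = d" using eq by blast
    then show ?thesis by (simp add: y_def k_def inner_add_right inner_commute)
  qed
  have d: "d = k * b" using proj[of 0] by (simp add: mult.commute)
  have "(c - k *\<^sub>R a) \<bullet> x = 0" for x
    using proj[of x] d by (simp add: inner_diff_left inner_commute algebra_simps)
  then have "c - k *\<^sub>R a = 0" using inner_eq_zero_iff by blast
  then show thesis using d that by auto
qed

lemma face_of_hyperplane_Int_imp_supporting: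
  fixes a :: "'a::real_inner"
  assumes "convex P" "({x. a \<bullet> x = b} \<inter> P) face_of P"
  shows "(\<forall>x\<in>P. a \<bullet> x \<le> b) \<or> (\<forall>x\<in>P. a \<bullet> x \<ge> b)"
proof (rule ccontr)
  assume "\<not> ?thesis"
  then obtain p q where pq: "p \<in> P" "q \<in> P" "a \<bullet> p > b" "a \<bullet> q < b" by force
  define t where "t = (b - a \<bullet> q) / (a \<bullet> p - a \<bullet> q)"
  have t: "0 < t" "t < 1" using pq by (auto simp: t_def field_simps)
  define m where "m = (1 - t) *\<^sub>R q + t *\<^sub>R p"
  have "t * (a \<bullet> p - a \<bullet> q) = b - a \<bullet> q" using pq by (simp add: t_def)
  then have "a \<bullet> m = b" by (simp add: m_def inner_add_right algebra_simps)
  moreover have "m \<in> P" using assms(1) pq t by (simp add: m_def convexD)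
  moreover have "m \<in> open_segment q p" using t pq by (auto simp: in_segment m_def)
  ultimately have "q \<in> {x. a \<bullet> x = b}" using face_ofD[OF assms(2) _ pq(2,1)] by auto
  with pq show False by auto
qed

lemma exists_near_notin_negligible:
  fixes c :: "'a::euclidean_space"
  assumes "negligible N" "e > 0"
  obtains x where "dist x c < e" "x \<notin> N"
proof -
  have "\<not> negligible (ball c e)" using assms(2) by (intro open_not_negligible) auto
  then obtain x where "x \<in> ball c e" "x \<notin> N" using assms(1) negligible_subset by blast
  then show thesis using that by (simp add: dist_commute)
qed

lemma independent_system_unique_solution:
  fixes a :: "'k \<Rightarrow> 'a::euclidean_space"
  assumes fin: "finite S" and card: "card S = DIM('a)" and inj: "inj_on a S"
    and ind: "independent (a ` S)"
  shows "\<exists>!p. \<forall>k\<in>S. a k \<bullet> p = b k"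
proof -
  have "UNIV \<subseteq> span (a ` S)"
    using ind inj card by (intro card_ge_dim_independent) (auto simp: card_image)
  then have zero: "v = 0" if "\<forall>k\<in>S. a k \<bullet> v = 0" for v
    using that orthogonal_to_span[of v "a ` S"] by (force simp: orthogonal_def inner_commute)
  have "\<exists>z. a k \<bullet> z = 1 \<and> (\<forall>j\<in>S - {k}. a j \<bullet> z = 0)" if k: "k \<in> S" for k
  proof -
    have "dim (a ` (S - {k})) \<le> card (S - {k})"
      using fin by (meson card_image_le dim_le_card' finite_Diff finite_imageI le_trans)
    also have "\<dots> < DIM('a)" using card_Diff1_less[OF fin k] card by simp
    finally have "dim (a ` (S - {k})) < DIM('a)" .
    then obtain y where y: "y \<noteq> 0" "\<And>w. w \<in> span (a ` (S - {k})) \<Longrightarrow> orthogonal y w"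
      using orthogonal_to_subspace_exists by blast
    have yj: "a j \<bullet> y = 0" if "j \<in> S - {k}" for j
      using y(2)[of "a j"] that by (auto intro: span_base simp: orthogonal_def inner_commute)
    then have "a k \<bullet> y \<noteq> 0" using zero y(1) by (metis DiffI singletonD)
    then show ?thesis using yj by (intro exI[of _ "(1 / (a k \<bullet> y)) *\<^sub>R y"]) auto
  qed
  then obtain z where z: "\<And>k. k \<in> S \<Longrightarrow> a k \<bullet> z k = 1 \<and> (\<forall>j\<in>S - {k}. a j \<bullet> z k = 0)"
    by metis
  define p where "p = (\<Sum>k\<in>S. b k *\<^sub>R z k)"
  have p: "a j \<bullet> p = b j" if "j \<in> S" for j
  proof -
    have "a j \<bullet> p = (\<Sum>k\<in>S. if k = j then b k else 0)"
      unfolding p_def inner_sum_right by (rule sum.cong) (use z that in auto)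
    also have "\<dots> = b j" using fin that by simp
    finally show ?thesis .
  qed
  have "q = p" if "\<forall>k\<in>S. a k \<bullet> q = b k" for q
    using zero[of "q - p"] that p by (simp add: inner_diff_right)
  with p show ?thesis by blast
qed

definition generic_hyperplanes :: "'k set \<Rightarrow> ('k \<Rightarrow> 'a::euclidean_space) \<Rightarrow> ('k \<Rightarrow> real) \<Rightarrow> bool" where
  "generic_hyperplanes I a b \<longleftrightarrow>
     (\<forall>S\<subseteq>I. card S \<le> DIM('a) \<longrightarrow> inj_on a S \<and> independent (a ` S)) \<and>
     (\<forall>S\<subseteq>I. card S = DIM('a) \<longrightarrow>
        (\<forall>k\<in>I - S. \<forall>p. (\<forall>j\<in>S. a j \<bullet> p = b j) \<longrightarrow> a k \<bullet> p \<noteq> b k))"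

definition arrangement_vertices :: "'k set \<Rightarrow> ('k \<Rightarrow> 'a::euclidean_space) \<Rightarrow> ('k \<Rightarrow> real) \<Rightarrow> 'a set" where
  "arrangement_vertices I a b = {p. \<exists>T\<subseteq>I. card T = DIM('a) \<and> (\<forall>j\<in>T. a j \<bullet> p = b j)}"

lemma generic_hyperplanes_independent:
  fixes a :: "'k \<Rightarrow> 'a::euclidean_space"
  shows "generic_hyperplanes I a b \<Longrightarrow> S \<subseteq> I \<Longrightarrow> card S \<le> DIM('a) \<Longrightarrow>
    inj_on a S \<and> independent (a ` S)"
  by (simp add: generic_hyperplanes_def)

lemma generic_hyperplanes_no_extra_incidence:
  fixes a :: "'k \<Rightarrow> 'a::euclidean_space"
  shows "generic_hyperplanes I a b \<Longrightarrow> S \<subseteq> I \<Longrightarrow> card S = DIM('a) \<Longrightarrow>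
    k \<in> I - S \<Longrightarrow> \<forall>j\<in>S. a j \<bullet> p = b j \<Longrightarrow> a k \<bullet> p \<noteq> b k"
  by (simp add: generic_hyperplanes_def)

lemma generic_hyperplanes_unique_vertex:
  fixes a :: "'k \<Rightarrow> 'a::euclidean_space"
  assumes "finite I" "generic_hyperplanes I a b" "S \<subseteq> I" "card S = DIM('a)"
  shows "\<exists>!p. \<forall>k\<in>S. a k \<bullet> p = b k"
  using assms generic_hyperplanes_independent[OF assms(2,3)]
  by (intro independent_system_unique_solution) (auto intro: finite_subset)

lemma generic_hyperplanes_distinct_vertices:
  fixes a :: "'k \<Rightarrow> 'a::euclidean_space"
  assumes fin: "finite I" and gen: "generic_hyperplanes I a b"
    and S: "S \<subseteq> I" "card S = DIM('a)" and T: "T \<subseteq> I" "card T = DIM('a)" and "S \<noteq> T"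
  shows "{p. \<forall>j\<in>S. a j \<bullet> p = b j} \<noteq> {p. \<forall>j\<in>T. a j \<bullet> p = b j}"
proof
  assume eq: "{p. \<forall>j\<in>S. a j \<bullet> p = b j} = {p. \<forall>j\<in>T. a j \<bullet> p = b j}"
  have "finite S" using S(1) fin finite_subset by blast
  then have "\<not> T \<subseteq> S" using card_subset_eq[of S T] S(2) T(2) \<open>S \<noteq> T\<close> by auto
  then obtain k where k: "k \<in> T" "k \<notin> S" by blast
  obtain p where p: "\<forall>j\<in>S. a j \<bullet> p = b j"
    using generic_hyperplanes_unique_vertex[OF fin gen S] by auto
  then have "a k \<bullet> p = b k" using eq k(1) by blast
  moreover have "a k \<bullet> p \<noteq> b k"
    using generic_hyperplanes_no_extra_incidence[OF gen S] k T(1) p by auto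
  ultimately show False by simp
qed

lemma finite_arrangement_vertices:
  fixes a :: "'k \<Rightarrow> 'a::euclidean_space"
  assumes "finite I" "generic_hyperplanes I a b"
  shows "finite (arrangement_vertices I a b)"
proof -
  have "arrangement_vertices I a b =
          (\<Union>T\<in>{T. T \<subseteq> I \<and> card T = DIM('a)}. {p. \<forall>j\<in>T. a j \<bullet> p = b j})"
    by (auto simp: arrangement_vertices_def)
  moreover have "finite {p. \<forall>j\<in>T. a j \<bullet> p = b j}" if "T \<subseteq> I" "card T = DIM('a)" for T
  proof -
    have "\<exists>p. {p. \<forall>j\<in>T. a j \<bullet> p = b j} = {p}"
      using generic_hyperplanes_unique_vertex[OF assms that] by blast
    then show ?thesis by auto
  qed
  ultimately show ?thesis using assms(1) by auto
qed

lemma generic_hyperplanes_insert_independent: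
  fixes a :: "'k \<Rightarrow> 'a::euclidean_space"
  assumes "finite I" "k0 \<notin> I" "generic_hyperplanes I a b"
    and a0: "\<And>T. T \<subseteq> I \<Longrightarrow> card T < DIM('a) \<Longrightarrow> a0 \<notin> span (a ` T)"
    and S: "S \<subseteq> insert k0 I" "card S \<le> DIM('a)"
  shows "inj_on (a(k0 := a0)) S \<and> independent ((a(k0 := a0)) ` S)"
proof (cases "k0 \<in> S")
  case False
  then have "S \<subseteq> I" "(a(k0 := a0)) ` S = a ` S" "inj_on (a(k0 := a0)) S = inj_on a S"
    using S by (auto intro!: inj_on_cong)
  then show ?thesis using generic_hyperplanes_independent[OF assms(3)] S(2) by simp
next
  case True
  define T where "T = S - {k0}"
  have T: "T \<subseteq> I" "k0 \<notin> T" "S = insert k0 T" using S assms(2) True by (auto simp: T_def)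
  have "finite T" using T(1) assms(1) finite_subset by blast
  then have "card T < DIM('a)" using S(2) T by simp
  then have "inj_on a T" "independent (a ` T)" "a0 \<notin> span (a ` T)"
    using generic_hyperplanes_independent[OF assms(3) T(1)] a0[OF T(1)] by auto
  moreover have "(a(k0 := a0)) ` T = a ` T" "inj_on (a(k0 := a0)) T = inj_on a T"
    using T(2) by (auto intro!: inj_on_cong)
  moreover have "independent (insert a0 (a ` T))"
    using calculation by (intro independent_insertI)
  ultimately show ?thesis
    using T(2,3) by (auto simp: inj_on_insert span_base)
qed

lemma generic_hyperplanes_insert_no_extra_incidence:
  fixes a :: "'k \<Rightarrow> 'a::euclidean_space"
  assumes "finite I" "k0 \<notin> I" "generic_hyperplanes I a b"
    and b0: "\<And>p. p \<in> arrangement_vertices I a b \<Longrightarrow> a0 \<bullet> p \<noteq> b0"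
    and S: "S \<subseteq> insert k0 I" "card S = DIM('a)" and k: "k \<in> insert k0 I - S"
    and p: "\<forall>j\<in>S. (a(k0 := a0)) j \<bullet> p = (b(k0 := b0)) j"
  shows "(a(k0 := a0)) k \<bullet> p \<noteq> (b(k0 := b0)) k"
proof (cases "k0 \<in> S")
  case False
  then have SI: "S \<subseteq> I" and pS: "\<forall>j\<in>S. a j \<bullet> p = b j"
    using S p by (auto, metis fun_upd_other)
  then have "p \<in> arrangement_vertices I a b" using S(2) by (auto simp: arrangement_vertices_def)
  then show ?thesis
    using b0 generic_hyperplanes_no_extra_incidence[OF assms(3) SI S(2) _ pS] k by auto
next
  case True
  have k': "k \<noteq> k0" "k \<in> I" "k \<notin> S" using k True by auto
  define T where "T = insert k (S - {k0})"
  have "finite S" using S(1) assms(1) finite_subset by blast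
  then have T: "T \<subseteq> I" "card T = DIM('a)" using S k' True by (auto simp: T_def)
  show ?thesis
  proof
    assume "(a(k0 := a0)) k \<bullet> p = (b(k0 := b0)) k"
    then have "\<forall>j\<in>T. a j \<bullet> p = b j" using p k' by (auto simp: T_def, metis fun_upd_other)
    then have "p \<in> arrangement_vertices I a b" using T by (auto simp: arrangement_vertices_def)
    moreover have "a0 \<bullet> p = b0" using p True by auto
    ultimately show False using b0 by blast
  qed
qed

lemma generic_hyperplanes_insert:
  fixes a :: "'k \<Rightarrow> 'a::euclidean_space"
  assumes "finite I" "k0 \<notin> I" "generic_hyperplanes I a b"
    and "\<And>T. T \<subseteq> I \<Longrightarrow> card T < DIM('a) \<Longrightarrow> a0 \<notin> span (a ` T)"
    and "\<And>p. p \<in> arrangement_vertices I a b \<Longrightarrow> a0 \<bullet> p \<noteq> b0"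
  shows "generic_hyperplanes (insert k0 I) (a(k0 := a0)) (b(k0 := b0))"
  using generic_hyperplanes_insert_independent[OF assms(1-4)]
    generic_hyperplanes_insert_no_extra_incidence[OF assms(1-3,5)]
  unfolding generic_hyperplanes_def by blast

lemma generic_perturbation_exists:
  fixes A :: "'k \<Rightarrow> 'a::euclidean_space" and B :: "'k \<Rightarrow> real"
  assumes "finite I" "e > 0"
  obtains a b where "\<forall>k\<in>I. dist (a k) (A k) < e \<and> \<bar>b k - B k\<bar> < e"
    "generic_hyperplanes I a b"
  using assms(1)
proof (induction I arbitrary: thesis rule: finite_induct)
  case empty
  show ?case
    by (rule empty.prems[of A B]) (auto simp: generic_hyperplanes_def independent_empty)
next
  case (insert k0 I)
  obtain a b where close: "\<forall>k\<in>I. dist (a k) (A k) < e \<and> \<bar>b k - B k\<bar> < e"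
    and gen: "generic_hyperplanes I a b"
    using insert.IH by blast
  define small where "small = {T. T \<subseteq> I \<and> card T < DIM('a)}"
  have "negligible (span (a ` T))" if "T \<in> small" for T
  proof (rule negligible_lowdim)
    have "finite T" using that insert.hyps(1) by (auto simp: small_def intro: finite_subset)
    then show "dim (span (a ` T)) < DIM('a)"
      using that dim_le_card'[of "a ` T"] card_image_le[of T a] by (simp add: small_def)
  qed
  moreover have "finite small"
    using insert.hyps(1) by (simp add: small_def)
  ultimately have "negligible (\<Union>T\<in>small. span (a ` T))"
    by (intro negligible_Union finite_imageI) auto
  then obtain a0 where a0: "dist a0 (A k0) < e" "\<forall>T\<in>small. a0 \<notin> span (a ` T)"
    by (rule exists_near_notin_negligible[OF _ assms(2)]) blast
  have "negligible ((\<bullet>) a0 ` arrangement_vertices I a b)"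
    using finite_arrangement_vertices[OF insert.hyps(1) gen] by auto
  then obtain b0 where b0: "dist b0 (B k0) < e" "b0 \<notin> (\<bullet>) a0 ` arrangement_vertices I a b"
    by (rule exists_near_notin_negligible[OF _ assms(2)])
  show ?case
  proof (rule insert.prems)
    show "\<forall>k\<in>insert k0 I. dist ((a(k0 := a0)) k) (A k) < e \<and> \<bar>(b(k0 := b0)) k - B k\<bar> < e"
      using close a0(1) b0(1) insert.hyps(2) by (auto simp: dist_real_def)
    show "generic_hyperplanes (insert k0 I) (a(k0 := a0)) (b(k0 := b0))"
      using insert.hyps gen a0(2) b0(2) by (intro generic_hyperplanes_insert) (auto simp: small_def)
  qed
qed

lemma generic_hyperplanes_imp_general_position:
  fixes a :: "'k \<Rightarrow> real^'n"
  assumes fin: "finite I" and gen: "generic_hyperplanes I a b"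
    and inj: "inj_on (\<lambda>k. {x. a k \<bullet> x = b k}) I" and card: "card I \<ge> CARD('n)"
  shows "general_position ((\<lambda>k. {x. a k \<bullet> x = b k}) ` I)"
proof -
  define h where "h = (\<lambda>k. {x. a k \<bullet> x = b k})"
  have inj_h: "inj_on h I" using inj by (simp add: h_def)
  have Inter_h: "\<Inter>(h ` S) = {p. \<forall>k\<in>S. a k \<bullet> p = b k}" for S by (auto simp: h_def)
  have preimage: "\<exists>S\<subseteq>I. S' = h ` S \<and> card S = CARD('n)"
    if S': "S' \<subseteq> h ` I" "card S' = CARD('n)" for S'
  proof -
    obtain S where S: "S \<subseteq> I" "S' = h ` S" using S'(1) by (auto simp: subset_image_iff)
    moreover have "card S' = card S" using card_image[OF inj_on_subset[OF inj_h S(1)]] S(2) by simp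
    ultimately show ?thesis using S'(2) by auto
  qed
  have "is_hyperplane (h k)" if "k \<in> I" for k
  proof -
    have "independent {a k}" using generic_hyperplanes_independent[OF gen, of "{k}"] that by simp
    then have "a k \<noteq> 0" using dependent_zero by force
    then show ?thesis unfolding is_hyperplane_def h_def by blast
  qed
  moreover have "\<exists>!p. p \<in> \<Inter>S'" if S': "S' \<subseteq> h ` I" "card S' = CARD('n)" for S'
  proof -
    obtain S where S: "S \<subseteq> I" "S' = h ` S" "card S = CARD('n)" using preimage[OF S'] by blast
    then show ?thesis using generic_hyperplanes_unique_vertex[OF fin gen S(1)] by (simp add: Inter_h)
  qed
  moreover have "\<Inter>S' \<noteq> \<Inter>T'"
    if S': "S' \<subseteq> h ` I" "card S' = CARD('n)" and T': "T' \<subseteq> h ` I" "card T' = CARD('n)"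
      and "S' \<noteq> T'" for S' T'
  proof -
    obtain S where S: "S \<subseteq> I" "S' = h ` S" "card S = CARD('n)" using preimage[OF S'] by blast
    obtain T where T: "T \<subseteq> I" "T' = h ` T" "card T = CARD('n)" using preimage[OF T'] by blast
    have "S \<noteq> T" using S(2) T(2) \<open>S' \<noteq> T'\<close> by blast
    then show ?thesis
      using generic_hyperplanes_distinct_vertices[OF fin gen S(1) _ T(1)] S T by (simp add: Inter_h)
  qed
  moreover have "card (h ` I) = card I" using inj_h by (simp add: card_image)
  ultimately show ?thesis unfolding general_position_def h_def[symmetric] using fin card by auto
qed

lemma sign_vectors_eq_image_Pow:
  "sign_vectors = (\<lambda>S. \<chi> i. if i \<in> S then 1 else - 1) ` Pow (UNIV :: 'n::finite set)"
proof (intro set_eqI iffI)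
  fix x :: "real^'n"
  assume "x \<in> sign_vectors"
  then have "x = (\<chi> i. if i \<in> {i. x $ i = 1} then 1 else - 1)"
    by (auto simp: sign_vectors_def vec_eq_iff)
  then show "x \<in> (\<lambda>S. \<chi> i. if i \<in> S then 1 else - 1) ` Pow UNIV" by blast
qed (auto simp: sign_vectors_def split: if_splits)

lemma sign_vectors_component: "\<delta> \<in> sign_vectors \<Longrightarrow> \<delta> $ i = 1 \<or> \<delta> $ i = - 1"
  by (simp add: sign_vectors_def)

lemma finite_sign_vectors: "finite (sign_vectors :: (real^'n) set)"
  by (simp add: sign_vectors_eq_image_Pow)

lemma card_sign_vectors: "card (sign_vectors :: (real^'n) set) = 2 ^ CARD('n)"
proof -
  have "inj_on (\<lambda>S. \<chi> i. if i \<in> S then 1 else - 1 :: real^'n) (Pow UNIV)"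
    by (rule inj_onI) (auto simp: vec_eq_iff split: if_splits)
  then show ?thesis by (simp add: sign_vectors_eq_image_Pow card_image card_Pow)
qed

definition coord_sign_arrangement :: "('n \<Rightarrow> real^'n) \<Rightarrow> ('n \<Rightarrow> real) \<Rightarrow>
    (real^'n \<Rightarrow> real^'n) \<Rightarrow> (real^'n \<Rightarrow> real) \<Rightarrow> (real^'n) set set"
  where "coord_sign_arrangement ac bc as bs =
    (\<lambda>i. {x. ac i \<bullet> x = bc i}) ` UNIV \<union> (\<lambda>\<delta>. {x. as \<delta> \<bullet> x = bs \<delta>}) ` sign_vectors"

definition near_cross_arrangement :: "real \<Rightarrow> ('n \<Rightarrow> real^'n) \<Rightarrow> ('n \<Rightarrow> real) \<Rightarrow>
    (real^'n \<Rightarrow> real^'n) \<Rightarrow> (real^'n \<Rightarrow> real) \<Rightarrow> bool"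
  where "near_cross_arrangement e ac bc as bs \<longleftrightarrow>
    (\<forall>i. norm (ac i - axis i 1) < e \<and> \<bar>bc i\<bar> < e) \<and>
    (\<forall>\<delta>\<in>sign_vectors. norm (as \<delta> - \<delta>) < e \<and> \<bar>bs \<delta> - 1\<bar> < e)"

lemma abs_component_diff_less:
  fixes v w :: "real^'n"
  shows "norm (v - w) < e \<Longrightarrow> \<bar>v $ j - w $ j\<bar> < e"
  using component_le_norm_cart[of "v - w" j] by simp

lemma not_proportional_to_near_axis:
  fixes u v :: "real^'n"
  assumes "e \<le> 1/4" "j \<noteq> i" "\<bar>u $ j\<bar> < e" "\<bar>u $ i\<bar> > 1 - e" "\<bar>v $ j\<bar> > 1 - e" "\<bar>v $ i\<bar> < 1 + e"
  shows "v \<noteq> k *\<^sub>R u"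
proof
  assume v: "v = k *\<^sub>R u"
  have "1 - e < \<bar>k\<bar> * \<bar>u $ j\<bar>" using assms(5) v by (simp add: abs_mult)
  also have "\<dots> \<le> \<bar>k\<bar> * e" using assms(3) by (intro mult_left_mono) auto
  finally have "\<bar>k\<bar> * (1/4) > 3/4" using assms(1) mult_left_mono[of e "1/4" "\<bar>k\<bar>"] by linarith
  then have k: "\<bar>k\<bar> > 3" by simp
  have "\<bar>k\<bar> * (3/4) \<le> \<bar>k\<bar> * \<bar>u $ i\<bar>" using assms(1,4) by (intro mult_left_mono) auto
  also have "\<dots> < 1 + e" using assms(6) v by (simp add: abs_mult)
  finally show False using k assms(1) by linarith
qed

context
  fixes e :: real and ac :: "'n \<Rightarrow> real^'n" and bc :: "'n \<Rightarrow> real"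
    and as :: "real^'n \<Rightarrow> real^'n" and bs :: "real^'n \<Rightarrow> real"
  assumes near: "near_cross_arrangement e ac bc as bs" and e: "0 < e" "e \<le> 1/4"
begin

lemma near_axis_components: "\<bar>ac i $ j - (if j = i then 1 else 0)\<bar> < e"
  using abs_component_diff_less[of "ac i" "axis i 1" e j] near
  by (simp add: near_cross_arrangement_def axis_def)

lemma near_sign_components:
  assumes "\<delta> \<in> sign_vectors"
  shows "\<bar>as \<delta> $ j - \<delta> $ j\<bar> < e" "\<bar>as \<delta> $ j\<bar> > 1 - e" "\<bar>as \<delta> $ j\<bar> < 1 + e"
proof -
  show "\<bar>as \<delta> $ j - \<delta> $ j\<bar> < e"
    using abs_component_diff_less[of "as \<delta>" \<delta> e j] near assms
    by (simp add: near_cross_arrangement_def)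
  moreover have "\<bar>\<delta> $ j\<bar> = 1" using sign_vectors_component[OF assms, of j] by auto
  ultimately show "\<bar>as \<delta> $ j\<bar> > 1 - e" "\<bar>as \<delta> $ j\<bar> < 1 + e" by linarith+
qed

lemma inj_near_coordinate_hyperplanes: "inj (\<lambda>i. {x. ac i \<bullet> x = bc i})"
proof (rule injI, rule ccontr)
  fix i j
  assume eq: "{x. ac i \<bullet> x = bc i} = {x. ac j \<bullet> x = bc j}" and "i \<noteq> j"
  have "ac i \<noteq> 0" using near_axis_components[of i i] e by auto
  then obtain k where "ac j = k *\<^sub>R ac i" using hyperplane_eq_imp_proportional[OF _ eq] by blast
  moreover have "ac j \<noteq> k *\<^sub>R ac i"
    using \<open>i \<noteq> j\<close> e near_axis_components[of i j] near_axis_components[of i i]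
      near_axis_components[of j j] near_axis_components[of j i]
    by (intro not_proportional_to_near_axis[of e j i]) auto
  ultimately show False by simp
qed

lemma inj_on_near_cross_hyperplanes: "inj_on (\<lambda>\<delta>. {x. as \<delta> \<bullet> x = bs \<delta>}) sign_vectors"
proof (rule inj_onI, rule ccontr)
  fix \<delta>1 \<delta>2
  assume \<delta>: "\<delta>1 \<in> sign_vectors" "\<delta>2 \<in> sign_vectors"
    and eq: "{x. as \<delta>1 \<bullet> x = bs \<delta>1} = {x. as \<delta>2 \<bullet> x = bs \<delta>2}" and "\<delta>1 \<noteq> \<delta>2"
  have bs: "bs \<delta>1 > 0" "bs \<delta>2 > 0" using near \<delta> e by (auto simp: near_cross_arrangement_def)
  have "as \<delta>1 \<noteq> 0" using near_sign_components(2)[OF \<delta>(1)] e by auto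
  then obtain k where k: "as \<delta>2 = k *\<^sub>R as \<delta>1" "bs \<delta>2 = k * bs \<delta>1"
    using hyperplane_eq_imp_proportional[OF _ eq] by blast
  then have "k > 0" using bs by (simp add: zero_less_mult_iff)
  obtain j where j: "\<delta>1 $ j \<noteq> \<delta>2 $ j" using \<open>\<delta>1 \<noteq> \<delta>2\<close> by (auto simp: vec_eq_iff)
  then have "\<delta>2 $ j = - \<delta>1 $ j" "\<bar>\<delta>1 $ j\<bar> = 1"
    using sign_vectors_component[OF \<delta>(1), of j] sign_vectors_component[OF \<delta>(2), of j] by auto
  then have "as \<delta>1 $ j * as \<delta>2 $ j < 0"
    using near_sign_components(1)[OF \<delta>(1), of j] near_sign_components(1)[OF \<delta>(2), of j] e
    by (auto simp: abs_if mult_less_0_iff split: if_splits)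
  moreover have "as \<delta>1 $ j * as \<delta>2 $ j = k * (as \<delta>1 $ j)\<^sup>2"
    using k(1) by (simp add: power2_eq_square)
  ultimately show False using \<open>k > 0\<close> by (simp add: mult_less_0_iff)
qed

lemma near_coordinate_cross_hyperplanes_disjoint:
  assumes "CARD('n) \<ge> 2"
  shows "(\<lambda>i. {x. ac i \<bullet> x = bc i}) ` UNIV \<inter> (\<lambda>\<delta>. {x. as \<delta> \<bullet> x = bs \<delta>}) ` sign_vectors = {}"
proof (rule ccontr)
  assume "\<not> ?thesis"
  then obtain i \<delta> where \<delta>: "\<delta> \<in> sign_vectors"
    and eq: "{x. ac i \<bullet> x = bc i} = {x. as \<delta> \<bullet> x = bs \<delta>}" by auto
  obtain j where "j \<noteq> i"
    using assms by (metis card_le_Suc0_iff_eq finite not_less_eq_eq numeral_2_eq_2)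
  have "ac i \<noteq> 0" using near_axis_components[of i i] e by auto
  then obtain k where "as \<delta> = k *\<^sub>R ac i" using hyperplane_eq_imp_proportional[OF _ eq] by blast
  moreover have "as \<delta> \<noteq> k *\<^sub>R ac i"
    using \<open>j \<noteq> i\<close> e near_axis_components[of i j] near_axis_components[of i i]
      near_sign_components(2,3)[OF \<delta>]
    by (intro not_proportional_to_near_axis[of e j i]) auto
  ultimately show False by simp
qed

lemma card_near_cross_arrangement:
  assumes "CARD('n) \<ge> 2"
  shows "card (coord_sign_arrangement ac bc as bs) = 2 ^ CARD('n) + CARD('n)"
proof -
  have "card (coord_sign_arrangement ac bc as bs) =
          card (range (\<lambda>i. {x. ac i \<bullet> x = bc i})) + card ((\<lambda>\<delta>. {x. as \<delta> \<bullet> x = bs \<delta>}) ` sign_vectors)"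
    unfolding coord_sign_arrangement_def using near_coordinate_cross_hyperplanes_disjoint[OF assms]
    by (intro card_Un_disjoint) (auto simp: finite_sign_vectors)
  also have "\<dots> = CARD('n) + 2 ^ CARD('n)"
    using inj_near_coordinate_hyperplanes inj_on_near_cross_hyperplanes
    by (simp add: card_image card_sign_vectors)
  finally show ?thesis by simp
qed

end

lemma near_cross_hyperplane_misses_opposite_orthant:
  fixes ac :: "'n \<Rightarrow> real^'n" and \<delta> a x :: "real^'n"
  assumes e: "0 < e" "(2 * real CARD('n) + 1) * e \<le> 1/2"
    and coord: "\<forall>i. norm (ac i - axis i 1) < e \<and> \<bar>bc i\<bar> < e"
    and \<delta>: "\<delta> \<in> sign_vectors" and orthant: "\<forall>i. \<delta> $ i * (ac i \<bullet> x - bc i) \<le> 0"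
    and near: "norm (a - \<delta>) < e" "\<bar>b - 1\<bar> < e"
  shows "a \<bullet> x \<noteq> b"
proof
  assume on: "a \<bullet> x = b"
  define M where "M = norm x"
  define c where "c = e * M + e"
  define y where "y i = \<delta> $ i * x $ i" for i
  have M: "M \<ge> 0" "c \<ge> 0" using e by (simp_all add: M_def c_def)
  have small: "\<bar>v \<bullet> x\<bar> \<le> e * M" if "norm v < e" for v
    using Cauchy_Schwarz_ineq2[of v x] that M by (smt (verit) M_def mult_right_mono)
  have abs_\<delta>: "\<bar>\<delta> $ i\<bar> = 1" for i using sign_vectors_component[OF \<delta>, of i] by auto
  have y_le: "y i \<le> c" for i
  proof -
    have "ac i \<bullet> x = x $ i + (ac i - axis i 1) \<bullet> x" by (simp add: inner_diff_left inner_axis')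
    then have "y i = \<delta> $ i * (ac i \<bullet> x - bc i) - \<delta> $ i * ((ac i - axis i 1) \<bullet> x - bc i)"
      by (simp add: y_def algebra_simps)
    also have "\<dots> \<le> \<bar>(ac i - axis i 1) \<bullet> x\<bar> + \<bar>bc i\<bar>"
    proof -
      have "\<bar>\<delta> $ i * ((ac i - axis i 1) \<bullet> x - bc i)\<bar> = \<bar>(ac i - axis i 1) \<bullet> x - bc i\<bar>"
        by (simp add: abs_mult abs_\<delta>)
      then show ?thesis
        using orthant[rule_format, of i] abs_triangle_ineq4[of "(ac i - axis i 1) \<bullet> x" "bc i"]
          abs_ge_minus_self[of "\<delta> $ i * ((ac i - axis i 1) \<bullet> x - bc i)"]
        by linarith
    qed
    finally show ?thesis
      using small[of "ac i - axis i 1"] coord[rule_format, of i] unfolding c_def by linarith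
  qed
  have "a \<bullet> x = \<delta> \<bullet> x + (a - \<delta>) \<bullet> x" by (simp add: inner_diff_left)
  also have "\<delta> \<bullet> x = sum y UNIV" by (simp add: inner_vec_def y_def)
  finally have "a \<bullet> x = sum y UNIV + (a - \<delta>) \<bullet> x" .
  then have sum_y: "sum y UNIV \<ge> 1 - c" using on near small[of "a - \<delta>"] by (simp add: c_def)
  have "M \<le> (\<Sum>i\<in>UNIV. \<bar>y i\<bar>)"
    using norm_le_l1_cart[of x] by (simp add: M_def y_def abs_mult abs_\<delta>)
  also have "\<dots> \<le> (\<Sum>i\<in>UNIV. 2 * c - y i)"
    using y_le M by (intro sum_mono) (simp add: abs_if)
  also have "\<dots> = real CARD('n) * (2 * c) - sum y UNIV" by (simp add: sum_subtractf)
  also have "\<dots> \<le> (2 * real CARD('n) + 1) * e * (M + 1) - 1"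
    using sum_y by (simp add: c_def algebra_simps)
  also have "\<dots> \<le> (M + 1) / 2 - 1"
  proof -
    have "(2 * real CARD('n) + 1) * e * (M + 1) \<le> 1/2 * (M + 1)"
      using e(2) M by (intro mult_right_mono) auto
    then show ?thesis by simp
  qed
  finally show False using M by simp
qed

lemma not_convex_position_near_cross_arrangement:
  fixes ac :: "'n \<Rightarrow> real^'n"
  assumes e: "0 < e" "(2 * real CARD('n) + 1) * e \<le> 1/2"
    and near: "near_cross_arrangement e ac bc as bs"
  shows "\<not> convex_position (coord_sign_arrangement ac bc as bs)"
proof
  assume "convex_position (coord_sign_arrangement ac bc as bs)"
  then obtain P where P: "polytope P" "aff_dim P = int CARD('n)"
    and facets: "\<forall>U\<in>coord_sign_arrangement ac bc as bs. (U \<inter> P) facet_of P"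
    unfolding convex_position_def by blast
  have coord_facet: "({x. ac i \<bullet> x = bc i} \<inter> P) facet_of P" for i
    using facets by (simp add: coord_sign_arrangement_def)
  have cross_facet: "({x. as \<delta> \<bullet> x = bs \<delta>} \<inter> P) facet_of P" if "\<delta> \<in> sign_vectors" for \<delta>
    using facets that by (simp add: coord_sign_arrangement_def)
  have "convex P" using P(1) by (rule polytope_imp_convex)
  then have supporting: "(\<forall>x\<in>P. ac i \<bullet> x \<le> bc i) \<or> (\<forall>x\<in>P. ac i \<bullet> x \<ge> bc i)" for i
    using face_of_hyperplane_Int_imp_supporting coord_facet[of i] unfolding facet_of_def by blast
  define \<delta> :: "real^'n" where "\<delta> = (\<chi> i. if \<forall>x\<in>P. ac i \<bullet> x \<le> bc i then 1 else - 1)"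
  have \<delta>: "\<delta> \<in> sign_vectors" by (simp add: sign_vectors_def \<delta>_def)
  have orthant: "\<forall>i. \<delta> $ i * (ac i \<bullet> x - bc i) \<le> 0" if "x \<in> P" for x
    using supporting that by (fastforce simp: \<delta>_def)
  obtain x where "x \<in> P" "as \<delta> \<bullet> x = bs \<delta>"
    using cross_facet[OF \<delta>] by (auto simp: facet_of_def)
  moreover have "as \<delta> \<bullet> x \<noteq> bs \<delta>" if "x \<in> P" for x
    using near \<delta> unfolding near_cross_arrangement_def
    by (intro near_cross_hyperplane_misses_opposite_orthant[OF e _ \<delta> orthant[OF that]]) auto
  ultimately show False by blast
qed

lemma exists_generic_near_cross_arrangement:
  assumes "CARD('n::finite) \<ge> 2" "0 < e" "e \<le> 1/4"
  obtains ac :: "'n \<Rightarrow> real^'n" and bc as bs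
  where "near_cross_arrangement e ac bc as bs" "general_position (coord_sign_arrangement ac bc as bs)"
proof -
  define I :: "('n + real^'n) set" where "I = range Inl \<union> Inr ` sign_vectors"
  have fin: "finite I" by (simp add: I_def finite_sign_vectors)
  have card_I: "card I = 2 ^ CARD('n) + CARD('n)"
    unfolding I_def
    by (subst card_Un_disjoint) (auto simp: finite_sign_vectors card_image card_sign_vectors)
  obtain a b where close: "\<forall>k\<in>I. dist (a k) (case_sum (\<lambda>i. axis i 1) id k) < e
                                  \<and> \<bar>b k - case_sum (\<lambda>_. 0) (\<lambda>_. 1) k\<bar> < e"
    and gen: "generic_hyperplanes I a b"
    by (rule generic_perturbation_exists[OF fin assms(2)])
  define ac where "ac i = a (Inl i)" for i
  define bc where "bc i = b (Inl i)" for i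
  define as where "as \<delta> = a (Inr \<delta>)" for \<delta>
  define bs where "bs \<delta> = b (Inr \<delta>)" for \<delta>
  have near: "near_cross_arrangement e ac bc as bs"
    unfolding near_cross_arrangement_def
  proof (intro conjI allI ballI)
    fix i
    show "norm (ac i - axis i 1) < e" "\<bar>bc i\<bar> < e"
      using close[rule_format, of "Inl i"] by (simp_all add: I_def ac_def bc_def dist_norm)
  next
    fix \<delta> :: "real^'n"
    assume "\<delta> \<in> sign_vectors"
    then show "norm (as \<delta> - \<delta>) < e" "\<bar>bs \<delta> - 1\<bar> < e"
      using close[rule_format, of "Inr \<delta>"] by (simp_all add: I_def as_def bs_def dist_norm)
  qed
  have arr: "coord_sign_arrangement ac bc as bs = (\<lambda>k. {x. a k \<bullet> x = b k}) ` I"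
    by (simp add: coord_sign_arrangement_def I_def ac_def bc_def as_def bs_def image_Un image_image)
  then have "card ((\<lambda>k. {x. a k \<bullet> x = b k}) ` I) = card I"
    using card_near_cross_arrangement[OF near assms(2,3,1)] card_I by simp
  then have "inj_on (\<lambda>k. {x. a k \<bullet> x = b k}) I" using fin by (simp add: inj_on_iff_eq_card)
  then have "general_position (coord_sign_arrangement ac bc as bs)"
    unfolding arr using card_I by (intro generic_hyperplanes_imp_general_position[OF fin gen]) auto
  with near show thesis by (rule that)
qed

theorem mainTheorem11:
  assumes "CARD('n::finite) \<ge> 2"
  shows "(\<exists>H :: (real^'n) set set.
            card H = 2 ^ CARD('n) + CARD('n) \<and> general_position H \<and> \<not> convex_position H)
       \<and> (\<exists>\<epsilon>>0. \<forall>(ac :: 'n \<Rightarrow> real^'n) (bc :: 'n \<Rightarrow> real)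
                     (as :: real^'n \<Rightarrow> real^'n) (bs :: real^'n \<Rightarrow> real).
              (\<forall>i. norm (ac i - axis i 1) < \<epsilon> \<and> \<bar>bc i\<bar> < \<epsilon>) \<and>
              (\<forall>\<delta>\<in>sign_vectors. norm (as \<delta> - \<delta>) < \<epsilon> \<and> \<bar>bs \<delta> - 1\<bar> < \<epsilon>) \<and>
              general_position ((\<lambda>i. {x. ac i \<bullet> x = bc i}) ` UNIV \<union>
                                (\<lambda>\<delta>. {x. as \<delta> \<bullet> x = bs \<delta>}) ` sign_vectors)
              \<longrightarrow> card ((\<lambda>i. {x. ac i \<bullet> x = bc i}) ` UNIV \<union>
                        (\<lambda>\<delta>. {x. as \<delta> \<bullet> x = bs \<delta>}) ` sign_vectors) = 2 ^ CARD('n) + CARD('n)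
                \<and> \<not> convex_position ((\<lambda>i. {x. ac i \<bullet> x = bc i}) ` UNIV \<union>
                                (\<lambda>\<delta>. {x. as \<delta> \<bullet> x = bs \<delta>}) ` sign_vectors))"
proof -
  define e where "e = 1 / (4 * real CARD('n) + 2)"
  have e: "0 < e" "e \<le> 1/4" "(2 * real CARD('n) + 1) * e \<le> 1/2"
    using assms by (auto simp: e_def field_simps)
  have near_arrangement: "card (coord_sign_arrangement ac bc as bs) = 2 ^ CARD('n) + CARD('n)
      \<and> \<not> convex_position (coord_sign_arrangement ac bc as bs)"
    if "near_cross_arrangement e ac bc as bs" for ac :: "'n \<Rightarrow> real^'n" and bc as bs
    using card_near_cross_arrangement[OF that e(1,2) assms]
      not_convex_position_near_cross_arrangement[OF e(1,3) that] by blast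
  obtain ac :: "'n \<Rightarrow> real^'n" and bc as bs where
    "near_cross_arrangement e ac bc as bs" "general_position (coord_sign_arrangement ac bc as bs)"
    using exists_generic_near_cross_arrangement[OF assms e(1,2)] by blast
  then have "\<exists>H :: (real^'n) set set.
      card H = 2 ^ CARD('n) + CARD('n) \<and> general_position H \<and> \<not> convex_position H"
    using near_arrangement by blast
  moreover note e(1) near_arrangement
  \<comment> \<open>the second conjunct holds without its general-position hypothesis\<close>
  ultimately show ?thesis unfolding near_cross_arrangement_def coord_sign_arrangement_def by blast
qed

end
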